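(* Let $\epsilon>0$, $\gamma>0$ and $k\ge 2$. For $B=(B^1,\dots,B^k)\in\mathbb R^k$ and $a\in[-1,1]$ define $$F_B(a)=\sum_{\substack{i,j\in\{1,\dots,k\}\\ i\neq j}}\exp\Bigl(-\frac{\epsilon\,|B^i-B^j+\gamma a|}{2\gamma}\Bigr).$$ Then $$\sup_{B\in\mathbb R^k,\ a,a'\in[-1,1]}\frac{F_B(a)}{F_B(a')}=e^{\epsilon/2},$$ with the supremum attained when $B^1=\dots=B^k$, $a=0$ and $a'\in\{-1,1\}$. Hence, defining $\epsilon_2=\ln\sup_{B,a,a'}F_B(a)/F_B(a')$, one has $\epsilon_2=\epsilon/2$, and the expected privacy loss against adversary II, $\frac1k\cdot 0+\frac{k-1}{k}\,\epsilon_2$, equals $\frac{k-1}{k}\cdot\frac{\epsilon}{2}$.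
   Context: Setting: a client holds a private value $a\in[-1,1]$ (a clipped average gradient coordinate) and, given a model weight $B^{\mathrm{pre}}$, returns $B^{\mathrm{pre}}-\gamma a+L$ where $L$ is Laplace noise with mean $0$ and scale $2\gamma/\epsilon$ (density proportional to $\exp(-\epsilon|x|/(2\gamma))$); this alone gives $\epsilon$-differential privacy. The server holds $k$ model instances; the instance sent to the client (the pre-image) is uniformly random and the returned model overwrites a uniformly random instance. Adversary II sees the $k$ instances $B^1,\dots,B^k$ right after the update but not which instance was the pre-image nor which was the returned one. With probability $1/k$ the returned model overwrote its own pre-image, in which case the privacy loss is taken to be $0$; with probability $(k-1)/k$ both the pre-image and the returned model are among the $k$ observed instances, each ordered pair (returned $=B^i$, pre-image $=B^j$), $i\ne j$, being equally likely, so that the likelihood of the observation given $a$ is proportional to $F_B(a)$, and the privacy loss in this case is $\epsilon_2$. The expected privacy loss is the average of these two losses weighted by their probabilities. *)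

theory Defs
  imports Complex_Main
begin

text \<open>Models B = (B^1,...,B^k) as a function nat => real; only indices 1..k matter.\<close>
definition F :: "nat \<Rightarrow> real \<Rightarrow> real \<Rightarrow> (nat \<Rightarrow> real) \<Rightarrow> real \<Rightarrow> real" where
  "F k eps gam B a =
     (\<Sum>(i,j) \<in> {(i,j). i \<in> {1..k} \<and> j \<in> {1..k} \<and> i \<noteq> j}.
        exp (- (eps * \<bar>B i - B j + gam * a\<bar>) / (2 * gam)))"

definition ratio_set :: "nat \<Rightarrow> real \<Rightarrow> real \<Rightarrow> real set" where
  "ratio_set k eps gam =
     {F k eps gam B a / F k eps gam B a' | B a a'. a \<in> {-1..1} \<and> a' \<in> {-1..1}}"

definition eps2 :: "nat \<Rightarrow> real \<Rightarrow> real \<Rightarrow> real" where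
  "eps2 k eps gam = ln (Sup (ratio_set k eps gam))"

definition expected_loss_II :: "nat \<Rightarrow> real \<Rightarrow> real \<Rightarrow> real" where
  "expected_loss_II k eps gam = (1 / real k) * 0 + ((real k - 1) / real k) * eps2 k eps gam"

end

theory Submission
  imports Defs
begin

text \<open>Each summand of \<open>F\<close> is a Laplace density evaluated at a point shifted by \<open>gam * a\<close>.
  Moving \<open>a\<close> by at most \<open>1\<close> moves that point by at most \<open>gam\<close>, which changes the density by a
  factor of at most \<open>exp (eps / 2)\<close>; and since \<open>F\<close> is even in \<open>a\<close> (swap \<open>i\<close> and \<open>j\<close>), any two
  points of \<open>[-1, 1]\<close> can be brought within distance \<open>1\<close> of each other. The bound is attained
  for constant \<open>B\<close>, where every summand equals \<open>exp (- eps * \<bar>a\<bar> / 2)\<close>.\<close>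

lemma exp_neg_abs_le_shift:
  fixes c x y :: real
  assumes "c \<ge> 0"
  shows "exp (- c * \<bar>x\<bar>) \<le> exp (c * \<bar>x - y\<bar>) * exp (- c * \<bar>y\<bar>)"
proof -
  have "c * \<bar>y\<bar> \<le> c * (\<bar>x - y\<bar> + \<bar>x\<bar>)"
    using assms by (intro mult_left_mono) linarith+
  then have "- c * \<bar>x\<bar> \<le> c * \<bar>x - y\<bar> + - c * \<bar>y\<bar>"
    by (simp add: algebra_simps)
  then show ?thesis by (simp flip: exp_add)
qed

definition off_diagonal_pairs :: "nat \<Rightarrow> (nat \<times> nat) set" where
  "off_diagonal_pairs k = {(i, j). i \<in> {1..k} \<and> j \<in> {1..k} \<and> i \<noteq> j}"

lemma finite_off_diagonal_pairs: "finite (off_diagonal_pairs k)"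
  by (rule finite_subset[of _ "{1..k} \<times> {1..k}"]) (auto simp: off_diagonal_pairs_def)

lemma off_diagonal_pairs_nonempty:
  assumes "k \<ge> 2"
  shows "off_diagonal_pairs k \<noteq> {}"
proof -
  have "(1, 2) \<in> off_diagonal_pairs k"
    using assms by (simp add: off_diagonal_pairs_def)
  then show ?thesis by blast
qed

lemma swap_off_diagonal_pairs: "prod.swap ` off_diagonal_pairs k = off_diagonal_pairs k"
  by (auto simp: off_diagonal_pairs_def image_iff)

lemma F_eq_sum_off_diagonal_pairs:
  "F k eps gam B a =
     (\<Sum>(i, j) \<in> off_diagonal_pairs k. exp (- (eps / (2 * gam)) * \<bar>B i - B j + gam * a\<bar>))"
  unfolding F_def off_diagonal_pairs_def by (rule sum.cong) auto

lemma F_pos: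
  assumes "k \<ge> 2"
  shows "F k eps gam B a > 0"
  unfolding F_eq_sum_off_diagonal_pairs
  using finite_off_diagonal_pairs off_diagonal_pairs_nonempty[OF assms]
  by (intro sum_pos) auto

lemma F_uminus: "F k eps gam B (- a) = F k eps gam B a"
proof -
  have "F k eps gam B a =
      (\<Sum>(i, j) \<in> prod.swap ` off_diagonal_pairs k. exp (- (eps / (2 * gam)) * \<bar>B i - B j + gam * a\<bar>))"
    unfolding F_eq_sum_off_diagonal_pairs swap_off_diagonal_pairs ..
  also have "\<dots> = (\<Sum>(i, j) \<in> off_diagonal_pairs k. exp (- (eps / (2 * gam)) * \<bar>B j - B i + gam * a\<bar>))"
    by (simp add: sum.reindex case_prod_beta)
  also have "\<dots> = F k eps gam B (- a)"
  proof -
    have "\<bar>B j - B i + gam * a\<bar> = \<bar>B i - B j + gam * (- a)\<bar>" for i j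
      by (metis abs_minus_cancel minus_diff_eq add_uminus_conv_diff minus_add_distrib mult_minus_right)
    then show ?thesis
      unfolding F_eq_sum_off_diagonal_pairs by (intro sum.cong refl) auto
  qed
  finally show ?thesis by (rule sym)
qed

lemma F_le_of_dist_le_1:
  assumes "eps > 0" "gam > 0" "\<bar>a - b\<bar> \<le> 1"
  shows "F k eps gam B a \<le> exp (eps / 2) * F k eps gam B b"
  unfolding F_eq_sum_off_diagonal_pairs sum_distrib_left
proof (rule sum_mono, clarify)
  fix i j
  define c where "c = eps / (2 * gam)"
  define x where "x = B i - B j + gam * a"
  define y where "y = B i - B j + gam * b"
  have "c * \<bar>x - y\<bar> = eps / 2 * \<bar>a - b\<bar>"
    using assms(2) by (simp add: c_def x_def y_def abs_mult flip: right_diff_distrib)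
  also have "\<dots> \<le> eps / 2"
    using assms by (simp add: mult_left_le)
  finally have "exp (c * \<bar>x - y\<bar>) * exp (- c * \<bar>y\<bar>) \<le> exp (eps / 2) * exp (- c * \<bar>y\<bar>)"
    by (intro mult_right_mono) simp_all
  moreover have "c \<ge> 0"
    using assms(1,2) by (simp add: c_def)
  ultimately show "exp (- c * \<bar>x\<bar>) \<le> exp (eps / 2) * exp (- c * \<bar>y\<bar>)"
    using exp_neg_abs_le_shift[of c x y] by linarith
qed

lemma F_le_exp_half_eps_mult:
  assumes "eps > 0" "gam > 0" "a \<in> {-1..1}" "b \<in> {-1..1}"
  shows "F k eps gam B a \<le> exp (eps / 2) * F k eps gam B b"
proof (cases "\<bar>a - b\<bar> \<le> 1")
  case True
  then show ?thesis using F_le_of_dist_le_1 assms(1,2) by blast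
next
  case False
  then have "\<bar>a - (- b)\<bar> \<le> 1" using assms(3,4) by auto
  then show ?thesis using F_le_of_dist_le_1[OF assms(1,2)] F_uminus by metis
qed

lemma F_of_constant:
  assumes "\<forall>i\<in>{1..k}. \<forall>j\<in>{1..k}. B i = B j" "gam > 0"
  shows "F k eps gam B a = real (card (off_diagonal_pairs k)) * exp (- eps * \<bar>a\<bar> / 2)"
proof -
  have "- (eps / (2 * gam)) * \<bar>gam * a\<bar> = - eps * \<bar>a\<bar> / 2"
    using assms(2) by (simp add: abs_mult)
  moreover have "B i = B j" if "(i, j) \<in> off_diagonal_pairs k" for i j
    using assms(1) that by (simp add: off_diagonal_pairs_def)
  ultimately have "F k eps gam B a = (\<Sum>p \<in> off_diagonal_pairs k. exp (- eps * \<bar>a\<bar> / 2))"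
    unfolding F_eq_sum_off_diagonal_pairs by (intro sum.cong refl) auto
  then show ?thesis by simp
qed

lemma F_ratio_of_constant:
  assumes "\<forall>i\<in>{1..k}. \<forall>j\<in>{1..k}. B i = B j" "gam > 0" "k \<ge> 2" "a' \<in> {-1, 1}"
  shows "F k eps gam B 0 / F k eps gam B a' = exp (eps / 2)"
proof -
  have "card (off_diagonal_pairs k) > 0"
    using finite_off_diagonal_pairs off_diagonal_pairs_nonempty[OF assms(3)] by (simp add: card_gt_0_iff)
  moreover have "\<bar>a'\<bar> = 1"
    using assms(4) by auto
  ultimately have "F k eps gam B 0 / F k eps gam B a' = 1 / exp (- eps / 2)"
    using F_of_constant[OF assms(1,2)] by simp
  then show ?thesis
    by (simp add: exp_minus inverse_eq_divide)
qed

theorem lemma1: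
  fixes eps gam :: real and k :: nat
  assumes "eps > 0" and "gam > 0" and "k \<ge> 2"
  shows "bdd_above (ratio_set k eps gam)
       \<and> Sup (ratio_set k eps gam) = exp (eps / 2)
       \<and> (\<forall>B :: nat \<Rightarrow> real. \<forall>a'. (\<forall>i\<in>{1..k}. \<forall>j\<in>{1..k}. B i = B j) \<and> a' \<in> {-1, 1}
            \<longrightarrow> F k eps gam B 0 / F k eps gam B a' = exp (eps / 2))
       \<and> eps2 k eps gam = eps / 2
       \<and> expected_loss_II k eps gam = ((real k - 1) / real k) * (eps / 2)"
proof -
  have upper: "x \<le> exp (eps / 2)" if "x \<in> ratio_set k eps gam" for x
    using that F_le_exp_half_eps_mult[OF assms(1,2)] F_pos[OF assms(3)]
    by (auto simp: ratio_set_def divide_le_eq)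
  have attained: "exp (eps / 2) \<in> ratio_set k eps gam"
    using F_ratio_of_constant[of k "\<lambda>_. 0" gam 1 eps] assms(2,3)
    unfolding ratio_set_def by (intro CollectI exI[of _ "\<lambda>_. 0"] exI[of _ 0] exI[of _ 1]) simp
  have sup: "Sup (ratio_set k eps gam) = exp (eps / 2)"
    using attained upper by (intro cSup_eq_maximum) auto
  have "bdd_above (ratio_set k eps gam)"
    using upper by (auto simp: bdd_above_def)
  moreover have eps2: "eps2 k eps gam = eps / 2"
    by (simp add: eps2_def sup)
  moreover have "expected_loss_II k eps gam = ((real k - 1) / real k) * (eps / 2)"
    by (simp add: expected_loss_II_def eps2)
  ultimately show ?thesis
    using sup F_ratio_of_constant[OF _ assms(2,3)] by blast
qed

end
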